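(* Let $E$ be a finite-dimensional quantum system, $T$ a qubit register with computational basis $\{\ket{0},\ket{1}\}$, and for $a,b\in\{0,1\}$ let $\sigma_{E|ab}$ be density operators on $E$. For $a,b\in\{0,1\}$ define $$\rho_{ET|ab}=\tfrac12\,\sigma_{E|ab}\otimes\ket{0}\!\bra{0}_T+\tfrac12\,\sigma_{E|\overline a\,\overline b}\otimes\ket{1}\!\bra{1}_T,$$ where $\overline a=a\oplus 1$, $\overline b=b\oplus1$. Fix a block size $k\ge1$, let $\mathbf{ET}=E_1T_1\cdots E_kT_k$ denote $k$ copies of $ET$, and for a string $\mathbf m=(m_1,\dots,m_k)\in\{0,1\}^k$ with bitwise complement $\overline{\mathbf m}$ define $$\rho_{\mathbf{ET}|\mathbf{mm}}=\rho_{ET|m_1m_1}\otimes\cdots\otimes\rho_{ET|m_km_k},\qquad \rho_{\mathbf{ET}|\overline{\mathbf m}\,\overline{\mathbf m}}=\rho_{ET|\overline{m_1}\,\overline{m_1}}\otimes\cdots\otimes\rho_{ET|\overline{m_k}\,\overline{m_k}}.$$ Define the classical-quantum states on a classical bit register $C$ and $\mathbf{ET}$: $$\widetilde\rho_{C\mathbf{ET}}=\tfrac12\ket{0}\!\bra{0}_C\otimes\rho_{\mathbf{ET}|\mathbf{mm}}+\tfrac12\ket{1}\!\bra{1}_C\otimes\rho_{\mathbf{ET}|\overline{\mathbf m}\,\overline{\mathbf m}},\qquad \overline\rho_{C\mathbf{ET}}=\tfrac12\ket{0}\!\bra{0}_C\otimes\rho_{ET|00}^{\otimes k}+\tfrac12\ket{1}\!\bra{1}_C\otimes\rho_{ET|11}^{\otimes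 k}.$$ Then for every $\mathbf m\in\{0,1\}^k$, $H(C|\mathbf{ET})_{\widetilde\rho}=H(C|\mathbf{ET})_{\overline\rho}$.
   Context: $H(C|\mathbf{ET})_\rho=H(C\mathbf{ET})_\rho-H(\mathbf{ET})_\rho$ denotes the conditional von Neumann entropy of the state $\rho$. *)

theory Defs
  imports "Jordan_Normal_Form.Jordan_Normal_Form"
begin

text \<open>Operators on finite-dimensional Hilbert spaces are complex square matrices.
  Tensor products are Kronecker products; a register of dimension n has basis indices 0..n-1.\<close>

definition kron :: "complex mat \<Rightarrow> complex mat \<Rightarrow> complex mat" where
  "kron A B = mat (dim_row A * dim_row B) (dim_col A * dim_col B)
     (\<lambda>(i, j). A $$ (i div dim_row B, j div dim_col B) * B $$ (i mod dim_row B, j mod dim_col B))"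

definition kron_list :: "complex mat list \<Rightarrow> complex mat" where
  "kron_list As = foldr kron As (1\<^sub>m 1)"

definition mat_trace :: "complex mat \<Rightarrow> complex" where
  "mat_trace A = (\<Sum>i<dim_row A. A $$ (i, i))"

definition density_op :: "nat \<Rightarrow> complex mat \<Rightarrow> bool" where
  "density_op n A \<longleftrightarrow> A \<in> carrier_mat n n
     \<and> (\<forall>i<n. \<forall>j<n. A $$ (i, j) = cnj (A $$ (j, i)))
     \<and> (\<forall>v. dim_vec v = n \<longrightarrow>
           (let q = (\<Sum>i<n. cnj (v $ i) * (A *\<^sub>v v) $ i) in Im q = 0 \<and> Re q \<ge> 0))
     \<and> mat_trace A = 1"

definition eigvals_list :: "complex mat \<Rightarrow> complex list" where
  "eigvals_list A = (SOME es. char_poly A = (\<Prod>e\<leftarrow>es. [:- e, 1:]))"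

definition vn_entropy :: "complex mat \<Rightarrow> real" where
  "vn_entropy A = - (\<Sum>e\<leftarrow>eigvals_list A. if Re e = 0 then 0 else Re e * log 2 (Re e))"

definition ptrace_first :: "nat \<Rightarrow> complex mat \<Rightarrow> complex mat" where
  "ptrace_first dA M = (let dB = dim_row M div dA in
     mat dB dB (\<lambda>(i, j). \<Sum>a<dA. M $$ (a * dB + i, a * dB + j)))"

definition cond_entropy :: "nat \<Rightarrow> complex mat \<Rightarrow> real" where
  "cond_entropy dC M = vn_entropy M - vn_entropy (ptrace_first dC M)"

definition proj0 :: "complex mat" where
  "proj0 = mat 2 2 (\<lambda>(i, j). if i = 0 \<and> j = 0 then 1 else 0)"
definition proj1 :: "complex mat" where
  "proj1 = mat 2 2 (\<lambda>(i, j). if i = 1 \<and> j = 1 then 1 else 0)"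

text \<open>Bits are booleans (True = 1); complement is negation.
  rho_ET sigma a b = 1/2 sigma_ab \<otimes> |0><0|_T + 1/2 sigma_{~a ~b} \<otimes> |1><1|_T.\<close>
definition rho_ET :: "(bool \<Rightarrow> bool \<Rightarrow> complex mat) \<Rightarrow> bool \<Rightarrow> bool \<Rightarrow> complex mat" where
  "rho_ET \<sigma> a b = (1/2) \<cdot>\<^sub>m kron (\<sigma> a b) proj0 + (1/2) \<cdot>\<^sub>m kron (\<sigma> (\<not> a) (\<not> b)) proj1"

definition rho_tilde :: "(bool \<Rightarrow> bool \<Rightarrow> complex mat) \<Rightarrow> bool list \<Rightarrow> complex mat" where
  "rho_tilde \<sigma> ms =
     (1/2) \<cdot>\<^sub>m kron proj0 (kron_list (map (\<lambda>m. rho_ET \<sigma> m m) ms))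
   + (1/2) \<cdot>\<^sub>m kron proj1 (kron_list (map (\<lambda>m. rho_ET \<sigma> (\<not> m) (\<not> m)) ms))"

definition rho_bar :: "(bool \<Rightarrow> bool \<Rightarrow> complex mat) \<Rightarrow> nat \<Rightarrow> complex mat" where
  "rho_bar \<sigma> k =
     (1/2) \<cdot>\<^sub>m kron proj0 (kron_list (replicate k (rho_ET \<sigma> False False)))
   + (1/2) \<cdot>\<^sub>m kron proj1 (kron_list (replicate k (rho_ET \<sigma> True True)))"

end

theory Submission
  imports Defs
begin

(* Let Q be the tensor product over the k positions of the bit flip 1_E \<otimes> X on T_i, applied
  exactly where m_i = 1. Since X swaps |0><0| and |1><1|, conjugation by 1_E \<otimes> X turns
  rho_{ET|aa} into rho_{ET|~a~a}; hence conjugation by 1_C \<otimes> Q maps the state rho_bar to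
  rho_tilde, and conjugation by Q maps the ET-marginal of rho_bar to that of rho_tilde. Q is
  self-inverse, so both are similarity transformations; these preserve the characteristic
  polynomial and with it the von Neumann entropy. *)

lemma sum_lessThan_mult:
  fixes g :: "nat \<Rightarrow> 'a::comm_monoid_add"
  shows "(\<Sum>p<a * b. g p) = (\<Sum>x<a. \<Sum>y<b. g (x * b + y))"
proof -
  have "sum g {x * b..<x * b + b} = (\<Sum>y<b. g (x * b + y))" for x
    using sum.shift_bounds_nat_ivl[of g 0 "x * b" b] by (simp add: atLeast0LessThan add.commute)
  then show ?thesis
    by (simp add: sum.nat_group[symmetric])
qed

lemma dim_kron [simp]:
  "dim_row (kron A B) = dim_row A * dim_row B"
  "dim_col (kron A B) = dim_col A * dim_col B"
  by (simp_all add: kron_def)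

lemma index_kron:
  "i < dim_row A * dim_row B \<Longrightarrow> j < dim_col A * dim_col B \<Longrightarrow>
   kron A B $$ (i, j) = A $$ (i div dim_row B, j div dim_col B) * B $$ (i mod dim_row B, j mod dim_col B)"
  by (simp add: kron_def)

lemma kron_carrier_mat [intro, simp]:
  "A \<in> carrier_mat a b \<Longrightarrow> B \<in> carrier_mat c e \<Longrightarrow> kron A B \<in> carrier_mat (a * c) (b * e)"
  by (intro carrier_matI) (auto dest: carrier_matD)

lemma kron_mult:
  assumes A: "A \<in> carrier_mat n1 k1" and B: "B \<in> carrier_mat n2 k2"
    and C: "C \<in> carrier_mat k1 m1" and D: "D \<in> carrier_mat k2 m2"
  shows "kron A B * kron C D = kron (A * C) (B * D)"
proof (rule eq_matI)
  fix i j assume "i < dim_row (kron (A * C) (B * D))" "j < dim_col (kron (A * C) (B * D))"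
  with A B C D have i: "i < n1 * n2" and j: "j < m1 * m2" by auto
  then have "0 < n2" "0 < m2" by (auto intro: gr0I)
  with i j have ij: "i div n2 < n1" "j div m2 < m1" "i mod n2 < n2" "j mod m2 < m2"
    by (simp_all add: less_mult_imp_div_less)
  have "(kron A B * kron C D) $$ (i, j) = (\<Sum>p<k1 * k2. kron A B $$ (i, p) * kron C D $$ (p, j))"
    using A B C D i j by (simp add: scalar_prod_def atLeast0LessThan)
  also have "\<dots> = (\<Sum>x<k1. \<Sum>y<k2.
      (A $$ (i div n2, x) * C $$ (x, j div m2)) * (B $$ (i mod n2, y) * D $$ (y, j mod m2)))"
  proof (unfold sum_lessThan_mult, intro sum.cong refl)
    fix x y assume x: "x \<in> {..<k1}" and y: "y \<in> {..<k2}"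
    have "x * k2 + y < (x + 1) * k2" using y by simp
    also have "\<dots> \<le> k1 * k2" using x by (intro mult_right_mono) auto
    finally show "kron A B $$ (i, x * k2 + y) * kron C D $$ (x * k2 + y, j) =
        (A $$ (i div n2, x) * C $$ (x, j div m2)) * (B $$ (i mod n2, y) * D $$ (y, j mod m2))"
      using A B C D i j y by (simp add: index_kron algebra_simps)
  qed
  also have "\<dots> = kron (A * C) (B * D) $$ (i, j)"
    using A B C D i j ij by (simp add: index_kron scalar_prod_def atLeast0LessThan sum_product)
  finally show "(kron A B * kron C D) $$ (i, j) = kron (A * C) (B * D) $$ (i, j)" .
qed (use A B C D in auto)

lemma kron_mult_mult:
  assumes "V \<in> carrier_mat a a" "A \<in> carrier_mat a a" "V' \<in> carrier_mat a a"
    and "W \<in> carrier_mat b b" "B \<in> carrier_mat b b" "W' \<in> carrier_mat b b"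
  shows "kron V W * kron A B * kron V' W' = kron (V * A * V') (W * B * W')"
  unfolding kron_mult[OF assms(1,4,2,5)] by (rule kron_mult) (use assms in auto)

lemma kron_one_mat: "kron (1\<^sub>m a) (1\<^sub>m b) = 1\<^sub>m (a * b)"
proof (rule eq_matI)
  fix i j assume "i < dim_row (1\<^sub>m (a * b) :: complex mat)" "j < dim_col (1\<^sub>m (a * b) :: complex mat)"
  then have i: "i < a * b" and j: "j < a * b" by auto
  then have "0 < b" by (auto intro: gr0I)
  moreover have "i = j \<longleftrightarrow> i div b = j div b \<and> i mod b = j mod b"
    by (metis div_mult_mod_eq)
  ultimately show "kron (1\<^sub>m a) (1\<^sub>m b) $$ (i, j) = (1\<^sub>m (a * b) :: complex mat) $$ (i, j)"
    using i j by (auto simp: index_kron less_mult_imp_div_less)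
qed auto

lemma kron_list_Nil [simp]: "kron_list [] = 1\<^sub>m 1"
  by (simp add: kron_list_def)

lemma kron_list_Cons [simp]: "kron_list (A # As) = kron A (kron_list As)"
  by (simp add: kron_list_def)

lemma kron_list_carrier_mat:
  "(\<And>m. f m \<in> carrier_mat n n) \<Longrightarrow> kron_list (map f ms) \<in> carrier_mat (n ^ length ms) (n ^ length ms)"
  by (induction ms) auto

lemma kron_list_mult:
  assumes "\<And>m. f m \<in> carrier_mat n n" and "\<And>m. g m \<in> carrier_mat n n"
  shows "kron_list (map f ms) * kron_list (map g ms) = kron_list (map (\<lambda>m. f m * g m) ms)"
proof (induction ms)
  case (Cons m ms)
  then show ?case
    using kron_mult[OF assms(1)[of m] kron_list_carrier_mat[of f, OF assms(1)]
        assms(2)[of m] kron_list_carrier_mat[of g, OF assms(2)]]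
    by simp
qed simp

lemma kron_list_conj:
  assumes "\<And>m. U m \<in> carrier_mat n n" and "\<And>m. A m \<in> carrier_mat n n"
  shows "kron_list (map U ms) * kron_list (map A ms) * kron_list (map U ms)
    = kron_list (map (\<lambda>m. U m * A m * U m) ms)"
  by (simp only: kron_list_mult[OF assms] kron_list_mult[OF mult_carrier_mat[OF assms(1,2)] assms(1)])

lemma kron_list_one_mat: "kron_list (map (\<lambda>_. 1\<^sub>m n) ms) = 1\<^sub>m (n ^ length ms)"
  by (induction ms) (simp_all add: kron_one_mat)

lemma kron_list_involution:
  assumes "\<And>m. U m \<in> carrier_mat n n" and "\<And>m. U m * U m = 1\<^sub>m n"
  shows "kron_list (map U ms) * kron_list (map U ms) = 1\<^sub>m (n ^ length ms)"
  by (simp only: kron_list_mult[OF assms(1,1)] assms(2) kron_list_one_mat)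

lemma mult_lincomb_mult:
  fixes U A B V :: "'a::comm_ring mat"
  assumes "U \<in> carrier_mat n n" "A \<in> carrier_mat n n" "B \<in> carrier_mat n n" "V \<in> carrier_mat n n"
  shows "U * (c \<cdot>\<^sub>m A + e \<cdot>\<^sub>m B) * V = c \<cdot>\<^sub>m (U * A * V) + e \<cdot>\<^sub>m (U * B * V)"
proof -
  have "U * (c \<cdot>\<^sub>m A + e \<cdot>\<^sub>m B) = U * (c \<cdot>\<^sub>m A) + U * (e \<cdot>\<^sub>m B)"
    by (rule mult_add_distrib_mat) (use assms in auto)
  also have "\<dots> = c \<cdot>\<^sub>m (U * A) + e \<cdot>\<^sub>m (U * B)"
    using assms by (simp add: mult_smult_distrib)
  finally have "U * (c \<cdot>\<^sub>m A + e \<cdot>\<^sub>m B) * V = (c \<cdot>\<^sub>m (U * A) + e \<cdot>\<^sub>m (U * B)) * V"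
    by simp
  also have "\<dots> = c \<cdot>\<^sub>m (U * A) * V + e \<cdot>\<^sub>m (U * B) * V"
    by (rule add_mult_distrib_mat) (use assms in auto)
  also have "\<dots> = c \<cdot>\<^sub>m (U * A * V) + e \<cdot>\<^sub>m (U * B * V)"
    using assms by (simp only: mult_smult_assoc_mat[OF mult_carrier_mat])
  finally show ?thesis .
qed

lemma similar_mat_conj_involution:
  fixes A U :: "'a::comm_ring_1 mat"
  assumes "A \<in> carrier_mat n n" "U \<in> carrier_mat n n" "U * U = 1\<^sub>m n"
  shows "similar_mat (U * A * U) A"
  using assms by (intro similar_matI[of _ _ U U n]) auto

lemma vn_entropy_similar: "similar_mat A B \<Longrightarrow> vn_entropy A = vn_entropy B"
  unfolding vn_entropy_def eigvals_list_def by (simp add: char_poly_similar)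

lemma proj0_carrier [simp]: "proj0 \<in> carrier_mat 2 2"
  by (simp add: proj0_def)

lemma proj1_carrier [simp]: "proj1 \<in> carrier_mat 2 2"
  by (simp add: proj1_def)

lemma ptrace_first_cq:
  assumes A: "A \<in> carrier_mat n n" and B: "B \<in> carrier_mat n n"
  shows "ptrace_first 2 (c \<cdot>\<^sub>m kron proj0 A + e \<cdot>\<^sub>m kron proj1 B) = c \<cdot>\<^sub>m A + e \<cdot>\<^sub>m B"
    (is "ptrace_first 2 ?M = _")
proof (rule eq_matI)
  fix i j assume "i < dim_row (c \<cdot>\<^sub>m A + e \<cdot>\<^sub>m B)" "j < dim_col (c \<cdot>\<^sub>m A + e \<cdot>\<^sub>m B)"
  with B have i: "i < n" and j: "j < n" by auto
  have proj: "dim_row proj0 = 2" "dim_col proj0 = 2" "dim_row proj1 = 2" "dim_col proj1 = 2"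
    "proj0 $$ (0, 0) = 1" "proj0 $$ (1, 1) = 0" "proj1 $$ (0, 0) = 0" "proj1 $$ (1, 1) = 1"
    by (simp_all add: proj0_def proj1_def)
  have "dim_row ?M div 2 = n" "{..<2::nat} = {0, 1}"
    using B proj by auto
  then have "ptrace_first 2 ?M $$ (i, j) = ?M $$ (i, j) + ?M $$ (n + i, n + j)"
    using i j by (simp add: ptrace_first_def Let_def)
  also have "\<dots> = (c \<cdot>\<^sub>m A + e \<cdot>\<^sub>m B) $$ (i, j)"
    using A B i j proj by (simp add: index_kron)
  finally show "ptrace_first 2 ?M $$ (i, j) = (c \<cdot>\<^sub>m A + e \<cdot>\<^sub>m B) $$ (i, j)" .
qed (use A B in \<open>auto simp: ptrace_first_def proj0_def proj1_def\<close>)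

lemma cond_entropy_cq_conj:
  assumes Q: "Q \<in> carrier_mat n n" "Q * Q = 1\<^sub>m n"
    and A: "A \<in> carrier_mat n n" and B: "B \<in> carrier_mat n n"
  shows "cond_entropy 2 (c \<cdot>\<^sub>m kron proj0 (Q * A * Q) + e \<cdot>\<^sub>m kron proj1 (Q * B * Q))
    = cond_entropy 2 (c \<cdot>\<^sub>m kron proj0 A + e \<cdot>\<^sub>m kron proj1 B)"
proof -
  let ?P = "kron (1\<^sub>m 2) Q"
  have P: "?P \<in> carrier_mat (2 * n) (2 * n)" "?P * ?P = 1\<^sub>m (2 * n)"
    using Q kron_mult[OF one_carrier_mat Q(1) one_carrier_mat Q(1), of 2] by (auto simp: kron_one_mat)
  have "?P * kron R X * ?P = kron R (Q * X * Q)"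
    if "R \<in> carrier_mat 2 2" "X \<in> carrier_mat n n" for R X
    using kron_mult_mult[OF one_carrier_mat that(1) one_carrier_mat Q(1) that(2) Q(1)] that(1)
    by simp
  then have joint: "c \<cdot>\<^sub>m kron proj0 (Q * A * Q) + e \<cdot>\<^sub>m kron proj1 (Q * B * Q)
      = ?P * (c \<cdot>\<^sub>m kron proj0 A + e \<cdot>\<^sub>m kron proj1 B) * ?P"
    using P A B by (simp add: mult_lincomb_mult[of _ "2 * n"])
  have marginal: "c \<cdot>\<^sub>m (Q * A * Q) + e \<cdot>\<^sub>m (Q * B * Q) = Q * (c \<cdot>\<^sub>m A + e \<cdot>\<^sub>m B) * Q"
    using Q A B by (simp add: mult_lincomb_mult)
  have e_joint: "vn_entropy (?P * (c \<cdot>\<^sub>m kron proj0 A + e \<cdot>\<^sub>m kron proj1 B) * ?P)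
      = vn_entropy (c \<cdot>\<^sub>m kron proj0 A + e \<cdot>\<^sub>m kron proj1 B)"
    by (rule vn_entropy_similar, rule similar_mat_conj_involution) (use P A B in auto)
  have e_marginal: "vn_entropy (Q * (c \<cdot>\<^sub>m A + e \<cdot>\<^sub>m B) * Q) = vn_entropy (c \<cdot>\<^sub>m A + e \<cdot>\<^sub>m B)"
    by (rule vn_entropy_similar, rule similar_mat_conj_involution) (use Q A B in auto)
  have conj_carrier: "Q * A * Q \<in> carrier_mat n n" "Q * B * Q \<in> carrier_mat n n"
    using Q A B by auto
  show ?thesis
    unfolding cond_entropy_def ptrace_first_cq[OF A B] ptrace_first_cq[OF conj_carrier] marginal
    unfolding joint e_joint e_marginal ..
qed

definition pauli_x :: "complex mat" where
  "pauli_x = mat 2 2 (\<lambda>(i, j). if i = j then 0 else 1)"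

lemma pauli_x_carrier [simp]: "pauli_x \<in> carrier_mat 2 2"
  by (simp add: pauli_x_def)

lemma pauli_x_involution: "pauli_x * pauli_x = 1\<^sub>m 2"
  by (rule eq_matI) (auto simp: pauli_x_def scalar_prod_def numeral_2_eq_2 less_Suc_eq)

lemma pauli_x_conj_proj0: "pauli_x * proj0 * pauli_x = proj1"
  by (rule eq_matI) (auto simp: pauli_x_def proj0_def proj1_def scalar_prod_def numeral_2_eq_2 less_Suc_eq)

lemma pauli_x_conj_proj1: "pauli_x * proj1 * pauli_x = proj0"
  by (rule eq_matI) (auto simp: pauli_x_def proj0_def proj1_def scalar_prod_def numeral_2_eq_2 less_Suc_eq)

lemma rho_ET_carrier_mat:
  "(\<And>a b. \<sigma> a b \<in> carrier_mat d d) \<Longrightarrow> rho_ET \<sigma> a b \<in> carrier_mat (d * 2) (d * 2)"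
  by (simp add: rho_ET_def)

lemma rho_ET_flip_T:
  assumes \<sigma>: "\<And>a b. \<sigma> a b \<in> carrier_mat d d"
  shows "kron (1\<^sub>m d) pauli_x * rho_ET \<sigma> a b * kron (1\<^sub>m d) pauli_x = rho_ET \<sigma> (\<not> a) (\<not> b)"
proof -
  have flip: "kron (1\<^sub>m d) pauli_x * kron (\<sigma> a' b') P * kron (1\<^sub>m d) pauli_x
      = kron (\<sigma> a' b') (pauli_x * P * pauli_x)" if "P \<in> carrier_mat 2 2" for a' b' P
    using kron_mult_mult[OF one_carrier_mat \<sigma> one_carrier_mat pauli_x_carrier that pauli_x_carrier]
    by (simp only: left_mult_one_mat[OF \<sigma>] right_mult_one_mat[OF \<sigma>])
  have "kron (1\<^sub>m d) pauli_x * rho_ET \<sigma> a b * kron (1\<^sub>m d) pauli_x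
      = (1/2) \<cdot>\<^sub>m kron (\<sigma> a b) proj1 + (1/2) \<cdot>\<^sub>m kron (\<sigma> (\<not> a) (\<not> b)) proj0"
    unfolding rho_ET_def
    by (subst mult_lincomb_mult[of _ "d * 2"])
      (auto simp: \<sigma> flip pauli_x_conj_proj0 pauli_x_conj_proj1)
  also have "\<dots> = rho_ET \<sigma> (\<not> a) (\<not> b)"
    unfolding rho_ET_def not_not by (rule comm_add_mat[of _ "d * 2" "d * 2"]) (use \<sigma> in auto)
  finally show ?thesis .
qed

definition cond_flip :: "nat \<Rightarrow> bool \<Rightarrow> complex mat" where
  "cond_flip d m = (if m then kron (1\<^sub>m d) pauli_x else 1\<^sub>m (d * 2))"

lemma cond_flip_carrier_mat: "cond_flip d m \<in> carrier_mat (d * 2) (d * 2)"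
  by (auto simp: cond_flip_def)

lemma cond_flip_involution: "cond_flip d m * cond_flip d m = 1\<^sub>m (d * 2)"
  using kron_mult[OF one_carrier_mat pauli_x_carrier one_carrier_mat pauli_x_carrier, of d]
  by (simp add: cond_flip_def pauli_x_involution kron_one_mat)

lemma rho_ET_cond_flip:
  assumes "\<And>a b. \<sigma> a b \<in> carrier_mat d d"
  shows "cond_flip d m * rho_ET \<sigma> a b * cond_flip d m = rho_ET \<sigma> (a \<noteq> m) (b \<noteq> m)"
proof (cases m)
  case False
  have "rho_ET \<sigma> a b \<in> carrier_mat (d * 2) (d * 2)"
    by (rule rho_ET_carrier_mat[OF assms])
  with False show ?thesis
    by (simp add: cond_flip_def left_mult_one_mat right_mult_one_mat)
qed (simp add: cond_flip_def rho_ET_flip_T assms)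

theorem lemma1:
  fixes \<sigma> :: "bool \<Rightarrow> bool \<Rightarrow> complex mat" and d k :: nat and ms :: "bool list"
  assumes "\<And>a b. density_op d (\<sigma> a b)"
    and "k \<ge> 1"
    and "length ms = k"
  shows "cond_entropy 2 (rho_tilde \<sigma> ms) = cond_entropy 2 (rho_bar \<sigma> k)"
proof -
  have \<sigma>: "\<And>a b. \<sigma> a b \<in> carrier_mat d d"
    using assms(1) by (simp add: density_op_def)
  define Q where "Q = kron_list (map (cond_flip d) ms)"
  have Q: "Q \<in> carrier_mat ((d * 2) ^ k) ((d * 2) ^ k)" "Q * Q = 1\<^sub>m ((d * 2) ^ k)"
    unfolding Q_def assms(3)[symmetric]
    by (rule kron_list_carrier_mat cond_flip_carrier_mat kron_list_involution cond_flip_involution)+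
  have R: "kron_list (replicate k (rho_ET \<sigma> a a)) \<in> carrier_mat ((d * 2) ^ k) ((d * 2) ^ k)" for a
    unfolding assms(3)[symmetric] map_replicate_const[symmetric]
    by (rule kron_list_carrier_mat[OF rho_ET_carrier_mat[OF \<sigma>]])
  have flip: "kron_list (map (\<lambda>m. rho_ET \<sigma> (a \<noteq> m) (a \<noteq> m)) ms)
      = Q * kron_list (replicate k (rho_ET \<sigma> a a)) * Q" for a
    unfolding Q_def assms(3)[symmetric] map_replicate_const[symmetric]
    by (simp add: kron_list_conj[of "cond_flip d" "d * 2" "\<lambda>_. rho_ET \<sigma> a a",
        OF cond_flip_carrier_mat rho_ET_carrier_mat[OF \<sigma>]] rho_ET_cond_flip[OF \<sigma>])
  have "rho_tilde \<sigma> ms = (1/2) \<cdot>\<^sub>m kron proj0 (Q * kron_list (replicate k (rho_ET \<sigma> False False)) * Q)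
      + (1/2) \<cdot>\<^sub>m kron proj1 (Q * kron_list (replicate k (rho_ET \<sigma> True True)) * Q)"
    using flip[of False] flip[of True] by (simp add: rho_tilde_def)
  then show ?thesis
    unfolding rho_bar_def using Q R by (simp add: cond_entropy_cq_conj)
qed

end
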